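(* Let $G_1$ and $G_2$ be finite simple graphs with the same number $n\ge 1$ of vertices, and suppose the centers of their Clifford graph algebras have the same dimension: $\dim_{\mathbb{C}} Z(A_{G_1}) = \dim_{\mathbb{C}} Z(A_{G_2})$. Then $A_{G_1}$ and $A_{G_2}$ are isomorphic as $\mathbb{C}$-algebras.
   Context: All graphs are finite, with no loops and no multiple edges. For a graph $G$ with vertices numbered $1,\dots,n$, the Clifford graph algebra $A_G$ is the unital associative $\mathbb{C}$-algebra generated by $e_1,\dots,e_n$ subject to the relations $e_i^2=-1$ for all $i$; $e_ie_j=-e_je_i$ if $i\neq j$ and vertices $i,j$ are adjacent; and $e_ie_j=e_je_i$ if $i\ne j$ and vertices $i,j$ are not adjacent. $Z(A)$ denotes the center of an algebra $A$. *)

theory Defs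
  imports "HOL-Analysis.Analysis" "HOL-Library.Function_Algebras"
begin

definition simple_graph :: "nat \<Rightarrow> (nat \<Rightarrow> nat \<Rightarrow> bool) \<Rightarrow> bool" where
  "simple_graph n E \<longleftrightarrow>
     (\<forall>i\<in>{1..n}. \<forall>j\<in>{1..n}. E i j = E j i) \<and> (\<forall>i\<in>{1..n}. \<not> E i i)"

text \<open>Concrete model of the Clifford graph algebra A_G.  An element is a
  complex-valued function on subsets of {1..n}: the coefficient vector w.r.t. the
  monomial basis e_S = e_(s1) ... e_(sk) (s1 < ... < sk).  The product is forced
  by the defining relations: e_S e_T = sgn(S,T) e_(S symmetric-difference T) with
  sgn(S,T) = (-1)^(#{(i,j) in S x T. j < i, i,j adjacent} + |S inter T|).\<close>

definition clif_carrier :: "nat \<Rightarrow> (nat set \<Rightarrow> complex) set" where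
  "clif_carrier n = {f. \<forall>S. \<not> S \<subseteq> {1..n} \<longrightarrow> f S = 0}"

definition clif_sign :: "(nat \<Rightarrow> nat \<Rightarrow> bool) \<Rightarrow> nat set \<Rightarrow> nat set \<Rightarrow> complex" where
  "clif_sign E S T =
     (-1) ^ (card {(i, j). i \<in> S \<and> j \<in> T \<and> j < i \<and> E i j} + card (S \<inter> T))"

definition clif_basis :: "nat set \<Rightarrow> (nat set \<Rightarrow> complex)" where
  "clif_basis S = (\<lambda>U. if U = S then 1 else 0)"

definition clif_one :: "nat set \<Rightarrow> complex" where
  "clif_one = clif_basis {}"

definition clif_mult ::
  "nat \<Rightarrow> (nat \<Rightarrow> nat \<Rightarrow> bool) \<Rightarrow> (nat set \<Rightarrow> complex) \<Rightarrow> (nat set \<Rightarrow> complex) \<Rightarrow> (nat set \<Rightarrow> complex)" where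
  "clif_mult n E f g =
     (\<lambda>U. if U \<subseteq> {1..n} then
             (\<Sum>S\<in>Pow {1..n}. \<Sum>T\<in>Pow {1..n}.
                if (S - T) \<union> (T - S) = U then clif_sign E S T * f S * g T else 0)
           else 0)"

definition clif_scale :: "complex \<Rightarrow> (nat set \<Rightarrow> complex) \<Rightarrow> (nat set \<Rightarrow> complex)" where
  "clif_scale c f = (\<lambda>S. c * f S)"

definition clif_center :: "nat \<Rightarrow> (nat \<Rightarrow> nat \<Rightarrow> bool) \<Rightarrow> (nat set \<Rightarrow> complex) set" where
  "clif_center n E = {z \<in> clif_carrier n. \<forall>x\<in>clif_carrier n. clif_mult n E z x = clif_mult n E x z}"

definition clif_center_dim :: "nat \<Rightarrow> (nat \<Rightarrow> nat \<Rightarrow> bool) \<Rightarrow> nat" where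
  "clif_center_dim n E = vector_space.dim clif_scale (clif_center n E)"

definition clif_iso :: "nat \<Rightarrow> (nat \<Rightarrow> nat \<Rightarrow> bool) \<Rightarrow> (nat \<Rightarrow> nat \<Rightarrow> bool) \<Rightarrow> bool" where
  "clif_iso n E1 E2 \<longleftrightarrow>
     (\<exists>\<phi>. bij_betw \<phi> (clif_carrier n) (clif_carrier n) \<and>
          (\<forall>x\<in>clif_carrier n. \<forall>y\<in>clif_carrier n. \<phi> (x + y) = \<phi> x + \<phi> y) \<and>
          (\<forall>c. \<forall>x\<in>clif_carrier n. \<phi> (clif_scale c x) = clif_scale c (\<phi> x)) \<and>
          (\<forall>x\<in>clif_carrier n. \<forall>y\<in>clif_carrier n.
              \<phi> (clif_mult n E1 x y) = clif_mult n E2 (\<phi> x) (\<phi> y)) \<and>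
          \<phi> clif_one = clif_one)"

end

theory Submission
  imports Defs "HOL-Combinatorics.Transposition"
begin

text \<open>
  The algebra A_G has the basis e_S, S \<subseteq> {1..n}, where e_S e_T = \<plusminus>e_U with U the symmetric
  difference of S and T; moreover e_S and e_T anticommute exactly when an odd number of edges
  joins S to T. This parity is an alternating bilinear form on the F_2-vector space of subsets
  of {1..n}, and the centre is spanned by the e_S with S in its radical, so dim Z(A_G) is the
  size of the radical. Symplectic Gram-Schmidt carries every graph, by an isometry of these
  forms, to a perfect matching on 2m vertices plus n - 2m isolated vertices, whose radical has
  2^(n - 2m) elements. Hence equal centre dimensions give an isometry f between the two forms,
  and f lifts to an algebra isomorphism e_S \<mapsto> \<gamma>(S) e_f(S): the two sign cocycles differ by
  a symmetric bilinear form over F_2, and each such form, represented by a symmetric 0-1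
  matrix N, is the coboundary of \<gamma>(S) = \<i>^N(S,S).
\<close>

text \<open>Keeps \<open>{1..n}\<close> from being rewritten to \<open>{Suc 0..n}\<close>, so that facts stated for \<open>{1..n}\<close>
  stay applicable after simplification.\<close>
declare One_nat_def [simp del]

section \<open>Counting pairs modulo two\<close>

definition pair_count :: "('a \<Rightarrow> 'b \<Rightarrow> bool) \<Rightarrow> 'a set \<Rightarrow> 'b set \<Rightarrow> nat" where
  "pair_count P S T = card {(i, j). i \<in> S \<and> j \<in> T \<and> P i j}"

lemma odd_card_sym_diff:
  assumes "finite A" "finite B"
  shows "odd (card (sym_diff A B)) \<longleftrightarrow> odd (card A) \<noteq> odd (card B)"
proof -
  have "card (sym_diff A B) = card (A - B) + card (B - A)"
    using assms by (intro card_Un_disjoint) auto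
  moreover have "card A = card (A - B) + card (A \<inter> B)" "card B = card (B - A) + card (A \<inter> B)"
    using card_Int_Diff[OF assms(1), of B] card_Int_Diff[OF assms(2), of A] by (simp_all add: Int_commute)
  ultimately have "card (sym_diff A B) + 2 * card (A \<inter> B) = card A + card B" by simp
  then show ?thesis by (metis even_add even_mult_iff even_numeral)
qed

lemma finite_pair_set:
  "finite S \<Longrightarrow> finite T \<Longrightarrow> finite {(i, j). i \<in> S \<and> j \<in> T \<and> P i j}"
  by (rule finite_subset[of _ "S \<times> T"]) auto

lemma odd_pair_count_sym_diff_left:
  assumes "finite X" "finite Y" "finite T"
  shows "odd (pair_count P (sym_diff X Y) T) \<longleftrightarrow> odd (pair_count P X T) \<noteq> odd (pair_count P Y T)"
proof -
  have "{(i, j). i \<in> sym_diff X Y \<and> j \<in> T \<and> P i j} =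
      sym_diff {(i, j). i \<in> X \<and> j \<in> T \<and> P i j} {(i, j). i \<in> Y \<and> j \<in> T \<and> P i j}"
    by blast
  then show ?thesis
    unfolding pair_count_def by (simp only: odd_card_sym_diff finite_pair_set assms)
qed

lemma odd_pair_count_sym_diff_right:
  assumes "finite X" "finite Y" "finite S"
  shows "odd (pair_count P S (sym_diff X Y)) \<longleftrightarrow> odd (pair_count P S X) \<noteq> odd (pair_count P S Y)"
proof -
  have "{(i, j). i \<in> S \<and> j \<in> sym_diff X Y \<and> P i j} =
      sym_diff {(i, j). i \<in> S \<and> j \<in> X \<and> P i j} {(i, j). i \<in> S \<and> j \<in> Y \<and> P i j}"
    by blast
  then show ?thesis
    unfolding pair_count_def by (simp only: odd_card_sym_diff finite_pair_set assms)
qed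

lemma pair_count_Un_left:
  assumes "finite X" "finite Y" "finite Z" "X \<inter> Y = {}"
  shows "pair_count P (X \<union> Y) Z = pair_count P X Z + pair_count P Y Z"
proof -
  have "{(i, j). i \<in> X \<union> Y \<and> j \<in> Z \<and> P i j} =
      {(i, j). i \<in> X \<and> j \<in> Z \<and> P i j} \<union> {(i, j). i \<in> Y \<and> j \<in> Z \<and> P i j}"
    by blast
  then show ?thesis
    unfolding pair_count_def using assms by (auto intro: card_Un_disjoint finite_pair_set)
qed

lemma pair_count_swap: "pair_count P T S = pair_count (\<lambda>i j. P j i) S T"
proof -
  have "{(i, j). i \<in> T \<and> j \<in> S \<and> P i j} = prod.swap ` {(i, j). i \<in> S \<and> j \<in> T \<and> P j i}"
    by auto
  then show ?thesis unfolding pair_count_def by (simp add: card_image)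
qed

lemma pair_count_Un_right:
  assumes "finite X" "finite Y" "finite Z" "X \<inter> Y = {}"
  shows "pair_count P Z (X \<union> Y) = pair_count P Z X + pair_count P Z Y"
  using pair_count_Un_left[OF assms, of "\<lambda>i j. P j i"] by (simp only: pair_count_swap[of P Z])

lemma pair_count_cong:
  "(\<And>i j. i \<in> S \<Longrightarrow> j \<in> T \<Longrightarrow> P i j = Q i j) \<Longrightarrow> pair_count P S T = pair_count Q S T"
  unfolding pair_count_def by (rule arg_cong[where f = card]) auto

lemma pair_count_False: "pair_count (\<lambda>_ _. False) S T = 0"
  by (simp add: pair_count_def)

lemma pair_count_disj_conj:
  assumes "finite S" "finite T"
  shows "pair_count P S T + pair_count Q S T =
    pair_count (\<lambda>i j. P i j \<or> Q i j) S T + pair_count (\<lambda>i j. P i j \<and> Q i j) S T"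
proof -
  have "{(i, j). i \<in> S \<and> j \<in> T \<and> (P i j \<or> Q i j)} =
      {(i, j). i \<in> S \<and> j \<in> T \<and> P i j} \<union> {(i, j). i \<in> S \<and> j \<in> T \<and> Q i j}"
    "{(i, j). i \<in> S \<and> j \<in> T \<and> P i j \<and> Q i j} =
      {(i, j). i \<in> S \<and> j \<in> T \<and> P i j} \<inter> {(i, j). i \<in> S \<and> j \<in> T \<and> Q i j}"
    by blast+
  then show ?thesis
    unfolding pair_count_def
    using card_Un_Int[OF finite_pair_set[OF assms] finite_pair_set[OF assms]] by presburger
qed

lemma pair_count_disj:
  assumes "finite S" "finite T" and disjoint: "\<And>i j. i \<in> S \<Longrightarrow> j \<in> T \<Longrightarrow> \<not> (P i j \<and> Q i j)"
  shows "pair_count (\<lambda>i j. P i j \<or> Q i j) S T = pair_count P S T + pair_count Q S T"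
proof -
  have "pair_count (\<lambda>i j. P i j \<and> Q i j) S T = pair_count (\<lambda>_ _. False) S T"
    using disjoint by (intro pair_count_cong) auto
  then show ?thesis
    using pair_count_disj_conj[OF assms(1,2), of P Q] by (simp add: pair_count_False)
qed

lemma pair_count_eq: "pair_count (=) S T = card (S \<inter> T)"
proof -
  have "{(i, j). i \<in> S \<and> j \<in> T \<and> i = j} = (\<lambda>i. (i, i)) ` (S \<inter> T)" by auto
  then show ?thesis unfolding pair_count_def by (simp add: card_image inj_on_def)
qed

lemma pair_count_singleton: "pair_count P {a} {b} = of_bool (P a b)"
proof -
  have "{(i, j). i \<in> {a} \<and> j \<in> {b} \<and> P i j} = (if P a b then {(a, b)} else {})"
    by auto
  then show ?thesis unfolding pair_count_def by simp
qed

lemma pair_count_singleton_right: "pair_count P S {j} = card {i \<in> S. P i j}"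
proof -
  have "{(i, j'). i \<in> S \<and> j' \<in> {j} \<and> P i j'} = (\<lambda>i. (i, j)) ` {i \<in> S. P i j}" by auto
  then show ?thesis unfolding pair_count_def by (simp add: card_image inj_on_def)
qed

lemma pair_count_if_singleton: "pair_count P (if c then {a} else {}) {b} = of_bool (c \<and> P a b)"
  by (cases c) (simp_all add: pair_count_singleton pair_count_def[of P "{}"])

lemma odd_of_bool_add3: "odd (of_bool A + of_bool B + of_bool C :: nat) \<longleftrightarrow> (A \<noteq> B) \<noteq> C"
  by (cases A; cases B; cases C) simp_all

lemma pair_count_sym_diff_diagonal:
  assumes sym: "\<And>i j. i \<in> V \<Longrightarrow> j \<in> V \<Longrightarrow> P i j = P j i"
    and "finite S" "finite T" "S \<subseteq> V" "T \<subseteq> V"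
  shows "pair_count P (sym_diff S T) (sym_diff S T) + 2 * pair_count P S T =
      pair_count P S S + pair_count P T T + 4 * pair_count P (S - T) (T - S)"
proof -
  let ?N = "pair_count P" and ?A = "S - T" and ?C = "S \<inter> T" and ?D = "T - S"
  have fin: "finite ?A" "finite ?C" "finite ?D" using assms by auto
  have N_sym: "?N X Y = ?N Y X" if "X \<subseteq> V" "Y \<subseteq> V" for X Y
    unfolding pair_count_swap[of P Y X] using that sym by (intro pair_count_cong) auto
  have split_S: "S = ?A \<union> ?C" and split_T: "T = ?C \<union> ?D" by auto
  have Un: "?N (X \<union> Y) Z = ?N X Z + ?N Y Z" "?N Z (X \<union> Y) = ?N Z X + ?N Z Y"
    if "finite X" "finite Y" "finite Z" "X \<inter> Y = {}" for X Y Z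
    using that by (simp_all add: pair_count_Un_left pair_count_Un_right)
  have disjoint: "?A \<inter> ?C = {}" "?C \<inter> ?D = {}" "?A \<inter> ?D = {}" by auto
  have "?N S S = ?N ?A ?A + ?N ?A ?C + ?N ?C ?A + ?N ?C ?C"
    by (subst (1 2) split_S) (simp add: Un fin disjoint)
  moreover have "?N T T = ?N ?C ?C + ?N ?C ?D + ?N ?D ?C + ?N ?D ?D"
    by (subst (1 2) split_T) (simp add: Un fin disjoint)
  moreover have "?N (?A \<union> ?D) (?A \<union> ?D) = ?N ?A ?A + ?N ?A ?D + ?N ?D ?A + ?N ?D ?D"
    by (simp add: Un fin disjoint)
  moreover have "?N S T = ?N ?A ?C + ?N ?A ?D + ?N ?C ?C + ?N ?C ?D"
    by (subst split_S, subst split_T) (simp add: Un fin disjoint)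
  moreover have "?N ?C ?A = ?N ?A ?C" "?N ?D ?C = ?N ?C ?D" "?N ?D ?A = ?N ?A ?D"
    using N_sym assms by (meson Diff_subset Int_lower1 subset_trans)+
  ultimately show ?thesis by simp
qed

section \<open>Linear algebra over F_2 on a power set\<close>

text \<open>Subsets of V form an F_2-vector space under symmetric difference; truth values are
  F_2, with \<open>\<noteq>\<close> as addition.\<close>

definition symdiff_additive :: "'a set \<Rightarrow> ('a set \<Rightarrow> bool) \<Rightarrow> bool" where
  "symdiff_additive V F \<longleftrightarrow> (\<forall>X\<subseteq>V. \<forall>Y\<subseteq>V. F (sym_diff X Y) = (F X \<noteq> F Y))"

definition symdiff_bilinear :: "'a set \<Rightarrow> ('a set \<Rightarrow> 'a set \<Rightarrow> bool) \<Rightarrow> bool" where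
  "symdiff_bilinear V B \<longleftrightarrow> (\<forall>T\<subseteq>V. symdiff_additive V (\<lambda>X. B X T) \<and> symdiff_additive V (B T))"

definition symdiff_linear :: "'a set \<Rightarrow> ('a set \<Rightarrow> 'b set) \<Rightarrow> bool" where
  "symdiff_linear V f \<longleftrightarrow> (\<forall>S\<subseteq>V. \<forall>T\<subseteq>V. f (sym_diff S T) = sym_diff (f S) (f T))"

lemma symdiff_bilinear_left:
  "symdiff_bilinear V B \<Longrightarrow> X \<subseteq> V \<Longrightarrow> Y \<subseteq> V \<Longrightarrow> T \<subseteq> V \<Longrightarrow>
    B (sym_diff X Y) T = (B X T \<noteq> B Y T)"
  unfolding symdiff_bilinear_def symdiff_additive_def by simp

lemma symdiff_bilinear_right:
  "symdiff_bilinear V B \<Longrightarrow> X \<subseteq> V \<Longrightarrow> Y \<subseteq> V \<Longrightarrow> T \<subseteq> V \<Longrightarrow>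
    B T (sym_diff X Y) = (B T X \<noteq> B T Y)"
  unfolding symdiff_bilinear_def symdiff_additive_def by simp

lemma symdiff_additive_empty: "symdiff_additive V F \<Longrightarrow> \<not> F {}"
  unfolding symdiff_additive_def by (metis Diff_cancel Un_empty empty_subsetI)

lemma symdiff_linear_empty: "symdiff_linear V f \<Longrightarrow> f {} = {}"
  unfolding symdiff_linear_def by (metis Diff_cancel Un_absorb empty_subsetI)

lemma symdiff_additive_xor:
  "symdiff_additive V F \<Longrightarrow> symdiff_additive V G \<Longrightarrow> symdiff_additive V (\<lambda>X. F X \<noteq> G X)"
  unfolding symdiff_additive_def by auto

lemma symdiff_bilinear_xor:
  "symdiff_bilinear V B1 \<Longrightarrow> symdiff_bilinear V B2 \<Longrightarrow> symdiff_bilinear V (\<lambda>S T. B1 S T \<noteq> B2 S T)"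
  unfolding symdiff_bilinear_def by (intro allI impI conjI symdiff_additive_xor) auto

lemma symdiff_bilinear_comp:
  assumes B: "symdiff_bilinear V B" and f: "symdiff_linear V f" and into: "\<And>S. S \<subseteq> V \<Longrightarrow> f S \<subseteq> V"
  shows "symdiff_bilinear V (\<lambda>S T. B (f S) (f T))"
  unfolding symdiff_bilinear_def symdiff_additive_def
proof (intro allI impI conjI)
  fix T X Y assume T: "T \<subseteq> V" and X: "X \<subseteq> V" and Y: "Y \<subseteq> V"
  have "f (sym_diff X Y) = sym_diff (f X) (f Y)" using f X Y unfolding symdiff_linear_def by blast
  then show "B (f (sym_diff X Y)) (f T) = (B (f X) (f T) \<noteq> B (f Y) (f T))"
    and "B (f T) (f (sym_diff X Y)) = (B (f T) (f X) \<noteq> B (f T) (f Y))"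
    using symdiff_bilinear_left[OF B] symdiff_bilinear_right[OF B] into[OF T] into[OF X] into[OF Y]
    by simp_all
qed

lemma symdiff_bilinear_odd_pair_count:
  assumes "finite V"
  shows "symdiff_bilinear V (\<lambda>S T. odd (pair_count P S T))"
  unfolding symdiff_bilinear_def symdiff_additive_def
proof (intro allI impI conjI)
  fix T X Y assume "T \<subseteq> V" "X \<subseteq> V" "Y \<subseteq> V"
  then have "finite T" "finite X" "finite Y" using assms finite_subset by blast+
  then show "odd (pair_count P (sym_diff X Y) T) \<longleftrightarrow> odd (pair_count P X T) \<noteq> odd (pair_count P Y T)"
    and "odd (pair_count P T (sym_diff X Y)) \<longleftrightarrow> odd (pair_count P T X) \<noteq> odd (pair_count P T Y)"
    by (simp_all only: odd_pair_count_sym_diff_left odd_pair_count_sym_diff_right)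
qed

lemma symdiff_additive_eqI:
  assumes F: "symdiff_additive V F" and G: "symdiff_additive V G"
    and singletons: "\<And>i. i \<in> V \<Longrightarrow> F {i} = G {i}"
    and "finite S" "S \<subseteq> V"
  shows "F S = G S"
  using assms(4,5)
proof (induction S rule: finite_induct)
  case empty
  then show ?case using symdiff_additive_empty F G by blast
next
  case (insert x S)
  then have "insert x S = sym_diff S {x}" "{x} \<subseteq> V" "S \<subseteq> V" by auto
  then show ?case
    using insert F G singletons unfolding symdiff_additive_def by (metis insert_subset)
qed

lemma symdiff_bilinear_eq_odd_pair_count:
  assumes V: "finite V" and B: "symdiff_bilinear V B" and "S \<subseteq> V" "T \<subseteq> V"
  shows "B S T = odd (pair_count (\<lambda>i j. B {i} {j}) S T)"
proof -
  let ?C = "\<lambda>S T. odd (pair_count (\<lambda>i j. B {i} {j}) S T)"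
  have C: "symdiff_bilinear V ?C" by (rule symdiff_bilinear_odd_pair_count[OF V])
  have fin: "finite X" if "X \<subseteq> V" for X using V that finite_subset by blast
  have row: "B {i} T = ?C {i} T" if "i \<in> V" for i
  proof (rule symdiff_additive_eqI[where V = V])
    show "symdiff_additive V (B {i})" "symdiff_additive V (?C {i})"
      using B C that unfolding symdiff_bilinear_def by auto
  qed (use \<open>T \<subseteq> V\<close> fin in \<open>auto simp: pair_count_singleton\<close>)
  show ?thesis
  proof (rule symdiff_additive_eqI[where V = V and F = "\<lambda>X. B X T" and G = "\<lambda>X. ?C X T"])
    show "symdiff_additive V (\<lambda>X. B X T)" "symdiff_additive V (\<lambda>X. ?C X T)"
      using B C \<open>T \<subseteq> V\<close> unfolding symdiff_bilinear_def by auto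
  qed (use row \<open>S \<subseteq> V\<close> fin in auto)
qed

lemma symmetric_symdiff_bilinear_coboundary:
  assumes V: "finite V" and B: "symdiff_bilinear V B"
    and sym: "\<And>S T. S \<subseteq> V \<Longrightarrow> T \<subseteq> V \<Longrightarrow> B S T = B T S"
  obtains \<gamma> :: "'a set \<Rightarrow> complex" where "\<And>S. \<gamma> S \<noteq> 0"
    and "\<And>S T. S \<subseteq> V \<Longrightarrow> T \<subseteq> V \<Longrightarrow> \<gamma> S * \<gamma> T = (if B S T then -1 else 1) * \<gamma> (sym_diff S T)"
proof
  let ?N = "pair_count (\<lambda>i j. B {i} {j})"
  show "\<i> ^ ?N S S \<noteq> 0" for S by simp
  fix S T assume S: "S \<subseteq> V" and T: "T \<subseteq> V"
  have fin: "finite S" "finite T" using S T V finite_subset by blast+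
  have "odd (?N S T) = B S T"
    using symdiff_bilinear_eq_odd_pair_count[OF V B S T] by simp
  then have "(if B S T then -1 else 1) * \<i> ^ ?N (sym_diff S T) (sym_diff S T)
      = \<i> ^ (?N (sym_diff S T) (sym_diff S T) + 2 * ?N S T)"
    by (auto simp: power_add power_mult)
  also have "\<dots> = \<i> ^ (?N S S + ?N T T + 4 * ?N (S - T) (T - S))"
    using pair_count_sym_diff_diagonal[of V "\<lambda>i j. B {i} {j}", OF _ fin S T] sym by simp
  also have "\<dots> = \<i> ^ ?N S S * \<i> ^ ?N T T"
    by (simp add: power_add power_mult)
  finally show "\<i> ^ ?N S S * \<i> ^ ?N T T = (if B S T then -1 else 1) * \<i> ^ ?N (sym_diff S T) (sym_diff S T)"
    by simp
qed

lemma bij_betw_Pow_subset: "bij_betw f (Pow V) (Pow V) \<Longrightarrow> S \<subseteq> V \<Longrightarrow> f S \<subseteq> V"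
  using bij_betw_apply[of f "Pow V" "Pow V" S] by simp

lemma inv_into_Pow_subset: "bij_betw f (Pow V) (Pow V) \<Longrightarrow> X \<subseteq> V \<Longrightarrow> inv_into (Pow V) f X \<subseteq> V"
  using bij_betw_apply[OF bij_betw_inv_into, of f "Pow V" "Pow V" X] by simp

lemma f_inv_into_Pow: "bij_betw f (Pow V) (Pow V) \<Longrightarrow> X \<subseteq> V \<Longrightarrow> f (inv_into (Pow V) f X) = X"
  by (simp add: bij_betw_def f_inv_into_f)

lemma inv_into_Pow_f: "bij_betw f (Pow V) (Pow V) \<Longrightarrow> S \<subseteq> V \<Longrightarrow> inv_into (Pow V) f (f S) = S"
  by (simp add: bij_betw_imp_inj_on)

lemma symdiff_linear_inv_into:
  assumes f: "bij_betw f (Pow V) (Pow V)" and lin: "symdiff_linear V f"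
  shows "symdiff_linear V (inv_into (Pow V) f)"
  unfolding symdiff_linear_def
proof (intro allI impI)
  let ?h = "inv_into (Pow V) f"
  fix S T assume S: "S \<subseteq> V" and T: "T \<subseteq> V"
  have ST: "sym_diff S T \<subseteq> V" "sym_diff (?h S) (?h T) \<subseteq> V"
    using S T inv_into_Pow_subset[OF f S] inv_into_Pow_subset[OF f T] by blast+
  have "f (sym_diff (?h S) (?h T)) = sym_diff S T"
    using lin S T inv_into_Pow_subset[OF f] f_inv_into_Pow[OF f] unfolding symdiff_linear_def by simp
  then have "?h (sym_diff S T) = ?h (f (sym_diff (?h S) (?h T)))" by simp
  then show "?h (sym_diff S T) = sym_diff (?h S) (?h T)"
    using inv_into_Pow_f[OF f ST(2)] by simp
qed

definition symdiff_sum :: "('a \<Rightarrow> 'b set) \<Rightarrow> 'a set \<Rightarrow> 'b set" where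
  "symdiff_sum g S = {x. odd (card {i \<in> S. x \<in> g i})}"

lemma symdiff_sum_sym_diff:
  assumes "finite S" "finite T"
  shows "symdiff_sum g (sym_diff S T) = sym_diff (symdiff_sum g S) (symdiff_sum g T)"
proof -
  have "odd (card {i \<in> sym_diff S T. x \<in> g i}) \<longleftrightarrow>
      odd (card {i \<in> S. x \<in> g i}) \<noteq> odd (card {i \<in> T. x \<in> g i})" for x
  proof -
    have "{i \<in> sym_diff S T. x \<in> g i} = sym_diff {i \<in> S. x \<in> g i} {i \<in> T. x \<in> g i}"
      by blast
    then show ?thesis
      using odd_card_sym_diff[of "{i \<in> S. x \<in> g i}" "{i \<in> T. x \<in> g i}"] assms by simp
  qed
  then show ?thesis unfolding symdiff_sum_def by blast
qed

lemma symdiff_sum_singleton: "symdiff_sum g {i} = g i"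
proof -
  have "{j \<in> {i}. x \<in> g j} = (if x \<in> g i then {i} else {})" for x by auto
  then show ?thesis unfolding symdiff_sum_def by auto
qed

lemma symdiff_sum_subset:
  assumes "\<And>i. i \<in> S \<Longrightarrow> g i \<subseteq> W"
  shows "symdiff_sum g S \<subseteq> W"
proof
  fix x assume "x \<in> symdiff_sum g S"
  then have "{i \<in> S. x \<in> g i} \<noteq> {}" unfolding symdiff_sum_def by fastforce
  then show "x \<in> W" using assms by blast
qed

lemma symdiff_sum_eq_empty_unitriangular:
  fixes g :: "'a::linorder \<Rightarrow> 'a set"
  assumes "finite S" and diag: "\<And>i. i \<in> S \<Longrightarrow> i \<in> g i" and below: "\<And>i. i \<in> S \<Longrightarrow> g i \<subseteq> {..i}"
    and "symdiff_sum g S = {}"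
  shows "S = {}"
proof (rule ccontr)
  assume "S \<noteq> {}"
  define k where "k = Max S"
  have k: "k \<in> S" "\<And>i. i \<in> S \<Longrightarrow> i \<le> k" using \<open>finite S\<close> \<open>S \<noteq> {}\<close> unfolding k_def by auto
  have "{i \<in> S. k \<in> g i} = {k}"
  proof (intro equalityI subsetI)
    fix i assume "i \<in> {i \<in> S. k \<in> g i}"
    then have "i \<in> S" "k \<le> i" using below by auto
    then show "i \<in> {k}" using k(2) by (simp add: order_antisym)
  qed (use k diag in auto)
  then have "k \<in> symdiff_sum g S" unfolding symdiff_sum_def by simp
  then show False using \<open>symdiff_sum g S = {}\<close> by simp
qed

lemma symdiff_sum_eq_empty_inj:
  assumes "inj_on \<pi> S" and "symdiff_sum (\<lambda>i. {\<pi> i}) S = {}"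
  shows "S = {}"
proof -
  have "\<pi> i \<in> symdiff_sum (\<lambda>i. {\<pi> i}) S" if "i \<in> S" for i
  proof -
    have "{j \<in> S. \<pi> i \<in> {\<pi> j}} = {i}"
      using assms(1) that by (auto dest: inj_onD)
    then show ?thesis unfolding symdiff_sum_def by simp
  qed
  then show "S = {}" using assms(2) by blast
qed

section \<open>Commutation in the Clifford graph algebra\<close>

definition anticommute :: "('a \<Rightarrow> 'a \<Rightarrow> bool) \<Rightarrow> 'a set \<Rightarrow> 'a set \<Rightarrow> bool" where
  "anticommute E S T \<longleftrightarrow> odd (pair_count E S T)"

definition commutation_radical :: "'a set \<Rightarrow> ('a \<Rightarrow> 'a \<Rightarrow> bool) \<Rightarrow> 'a set set" where
  "commutation_radical V E = {S. S \<subseteq> V \<and> (\<forall>T\<subseteq>V. \<not> anticommute E S T)}"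

definition clif_sign_rel :: "(nat \<Rightarrow> nat \<Rightarrow> bool) \<Rightarrow> nat \<Rightarrow> nat \<Rightarrow> bool" where
  "clif_sign_rel E i j \<longleftrightarrow> j < i \<and> E i j \<or> i = j"

lemma clif_sign_eq_pair_count:
  assumes "finite S" "finite T"
  shows "clif_sign E S T = (-1) ^ pair_count (clif_sign_rel E) S T"
proof -
  have "pair_count (clif_sign_rel E) S T = pair_count (\<lambda>i j. j < i \<and> E i j) S T + card (S \<inter> T)"
    unfolding clif_sign_rel_def[abs_def] pair_count_eq[symmetric]
    by (rule pair_count_disj[OF assms]) simp
  then show ?thesis unfolding clif_sign_def pair_count_def by simp
qed

lemma odd_clif_sign_rel_swap:
  assumes E: "simple_graph n E" and "S \<subseteq> {1..n}" "T \<subseteq> {1..n}"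
  shows "odd (pair_count (clif_sign_rel E) S T) \<noteq> odd (pair_count (clif_sign_rel E) T S)
    \<longleftrightarrow> anticommute E S T"
proof -
  have fin: "finite S" "finite T" using assms finite_subset by blast+
  have sym: "E i j = E j i" and irrefl: "\<not> E i i" if "i \<in> S" "j \<in> T" for i j
    using E that assms unfolding simple_graph_def by auto
  let ?R = "clif_sign_rel E"
  have "pair_count ?R S T + pair_count ?R T S =
      pair_count (\<lambda>i j. ?R i j \<or> ?R j i) S T + pair_count (\<lambda>i j. ?R i j \<and> ?R j i) S T"
    unfolding pair_count_swap[of _ T S] by (rule pair_count_disj_conj[OF fin])
  also have "pair_count (\<lambda>i j. ?R i j \<or> ?R j i) S T = pair_count (\<lambda>i j. E i j \<or> i = j) S T"
    using sym irrefl by (intro pair_count_cong) (auto simp: clif_sign_rel_def)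
  also have "\<dots> = pair_count E S T + pair_count (=) S T"
    using irrefl by (intro pair_count_disj fin) auto
  also have "pair_count (\<lambda>i j. ?R i j \<and> ?R j i) S T = pair_count (=) S T"
    by (intro pair_count_cong) (auto simp: clif_sign_rel_def)
  finally have "pair_count ?R S T + pair_count ?R T S = pair_count E S T + 2 * pair_count (=) S T"
    by simp
  then show ?thesis unfolding anticommute_def by (metis even_add even_mult_iff even_numeral)
qed

lemma anticommute_sym:
  "simple_graph n E \<Longrightarrow> S \<subseteq> {1..n} \<Longrightarrow> T \<subseteq> {1..n} \<Longrightarrow> anticommute E S T = anticommute E T S"
  using odd_clif_sign_rel_swap[of n E S T] odd_clif_sign_rel_swap[of n E T S] by blast

lemma not_anticommute_self: "simple_graph n E \<Longrightarrow> S \<subseteq> {1..n} \<Longrightarrow> \<not> anticommute E S S"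
  using odd_clif_sign_rel_swap[of n E S S] by simp

lemma clif_sign_commute_iff:
  assumes "simple_graph n E" "S \<subseteq> {1..n}" "T \<subseteq> {1..n}"
  shows "clif_sign E S T = clif_sign E T S \<longleftrightarrow> \<not> anticommute E S T"
proof -
  have "finite S" "finite T" using assms finite_subset by blast+
  then show ?thesis
    using odd_clif_sign_rel_swap[OF assms]
    by (simp add: clif_sign_eq_pair_count minus_one_power_iff) blast
qed

lemma sum_Pow_delta: "finite A \<Longrightarrow> X \<subseteq> A \<Longrightarrow> (\<Sum>S\<in>Pow A. if S = X then f S else 0) = f X"
  by (simp add: sum.delta)

lemma clif_basis_mult: "c * clif_basis T S = (if S = T then c else 0)"
  by (simp add: clif_basis_def)

lemma clif_mult_apply:
  assumes U: "U \<subseteq> {1..n}"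
  shows "clif_mult n E f g U =
    (\<Sum>S\<in>Pow {1..n}. clif_sign E S (sym_diff S U) * f S * g (sym_diff S U))"
proof -
  have "(\<Sum>T\<in>Pow {1..n}. if sym_diff S T = U then clif_sign E S T * f S * g T else 0) =
      clif_sign E S (sym_diff S U) * f S * g (sym_diff S U)" if "S \<subseteq> {1..n}" for S
  proof -
    have "(\<Sum>T\<in>Pow {1..n}. if sym_diff S T = U then clif_sign E S T * f S * g T else 0) =
        (\<Sum>T\<in>Pow {1..n}. if T = sym_diff S U then clif_sign E S T * f S * g T else 0)"
      by (rule sum.cong) auto
    also have "\<dots> = clif_sign E S (sym_diff S U) * f S * g (sym_diff S U)"
      using that U by (intro sum_Pow_delta) auto
    finally show ?thesis .
  qed
  then show ?thesis unfolding clif_mult_def using U by simp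
qed

lemma clif_mult_basis_right:
  assumes "T \<subseteq> {1..n}" "U \<subseteq> {1..n}"
  shows "clif_mult n E z (clif_basis T) U = clif_sign E (sym_diff U T) T * z (sym_diff U T)"
proof -
  have "clif_mult n E z (clif_basis T) U =
      (\<Sum>S\<in>Pow {1..n}. if S = sym_diff U T then clif_sign E S (sym_diff S U) * z S else 0)"
    unfolding clif_mult_apply[OF assms(2)] clif_basis_mult by (rule sum.cong) auto
  also have "\<dots> = clif_sign E (sym_diff U T) T * z (sym_diff U T)"
  proof -
    have "sym_diff (sym_diff U T) U = T" by blast
    then show ?thesis using assms by (subst sum_Pow_delta) auto
  qed
  finally show ?thesis .
qed

lemma clif_mult_basis_left:
  assumes "T \<subseteq> {1..n}" "U \<subseteq> {1..n}"
  shows "clif_mult n E (clif_basis T) z U = clif_sign E T (sym_diff T U) * z (sym_diff T U)"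
proof -
  have "clif_mult n E (clif_basis T) z U =
      (\<Sum>S\<in>Pow {1..n}. if S = T then clif_sign E S (sym_diff S U) * z (sym_diff S U) else 0)"
    unfolding clif_mult_apply[OF assms(2)] mult.commute[of _ "clif_basis T _"] mult.assoc[symmetric]
      clif_basis_mult by (rule sum.cong) auto
  also have "\<dots> = clif_sign E T (sym_diff T U) * z (sym_diff T U)"
    using assms by (subst sum_Pow_delta) auto
  finally show ?thesis .
qed

lemma clif_center_support_radical:
  assumes E: "simple_graph n E" and z: "z \<in> clif_center n E" and "z S \<noteq> 0"
  shows "S \<in> commutation_radical {1..n} E"
proof -
  have S: "S \<subseteq> {1..n}" using z \<open>z S \<noteq> 0\<close> unfolding clif_center_def clif_carrier_def by auto
  have "\<not> anticommute E S T" if T: "T \<subseteq> {1..n}" for T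
  proof -
    have "clif_basis T \<in> clif_carrier n" using T unfolding clif_carrier_def clif_basis_def by auto
    then have "clif_mult n E z (clif_basis T) (sym_diff S T) = clif_mult n E (clif_basis T) z (sym_diff S T)"
      using z unfolding clif_center_def by auto
    moreover have "sym_diff S T \<subseteq> {1..n}" using S T by blast
    moreover have "sym_diff (sym_diff S T) T = S" "sym_diff T (sym_diff S T) = S" by blast+
    ultimately have "clif_sign E S T * z S = clif_sign E T S * z S"
      using clif_mult_basis_left[OF T, of "sym_diff S T"] clif_mult_basis_right[OF T, of "sym_diff S T"]
      by simp
    then show ?thesis using \<open>z S \<noteq> 0\<close> clif_sign_commute_iff[OF E S T] by simp
  qed
  then show ?thesis unfolding commutation_radical_def using S by auto
qed

lemma clif_center_if_support_radical:
  assumes E: "simple_graph n E" and support: "\<And>S. z S \<noteq> 0 \<Longrightarrow> S \<in> commutation_radical {1..n} E"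
  shows "z \<in> clif_center n E"
proof -
  have z: "z \<in> clif_carrier n"
    using support unfolding clif_carrier_def commutation_radical_def by blast
  have "clif_mult n E z x U = clif_mult n E x z U" for x U
  proof (cases "U \<subseteq> {1..n}")
    case U: True
    have bij: "bij_betw (\<lambda>S. sym_diff S U) (Pow {1..n}) (Pow {1..n})"
      using U by (intro bij_betw_byWitness[where f' = "\<lambda>S. sym_diff S U"]) auto
    have "clif_mult n E x z U =
        (\<Sum>S\<in>Pow {1..n}. clif_sign E (sym_diff S U) S * x (sym_diff S U) * z S)"
    proof -
      have "sym_diff (sym_diff S U) U = S" for S by blast
      then show ?thesis
        unfolding clif_mult_apply[OF U]
        using sum.reindex_bij_betw[OF bij, of "\<lambda>S. clif_sign E S (sym_diff S U) * x S * z (sym_diff S U)"]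
        by simp
    qed
    also have "\<dots> = (\<Sum>S\<in>Pow {1..n}. clif_sign E S (sym_diff S U) * z S * x (sym_diff S U))"
    proof (rule sum.cong[OF refl])
      fix S assume S: "S \<in> Pow {1..n}"
      show "clif_sign E (sym_diff S U) S * x (sym_diff S U) * z S =
          clif_sign E S (sym_diff S U) * z S * x (sym_diff S U)"
      proof (cases "z S = 0")
        case False
        then have "S \<in> commutation_radical {1..n} E" by (rule support)
        moreover have SU: "sym_diff S U \<subseteq> {1..n}" using S U by blast
        ultimately have "\<not> anticommute E S (sym_diff S U)" unfolding commutation_radical_def by blast
        then have "clif_sign E S (sym_diff S U) = clif_sign E (sym_diff S U) S"
          using clif_sign_commute_iff[OF E _ SU] S by blast
        then show ?thesis by simp
      qed simp
    qed
    finally show ?thesis unfolding clif_mult_apply[OF U] by simp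
  qed (simp add: clif_mult_def)
  then show ?thesis unfolding clif_center_def using z by auto
qed

lemma clif_center_eq:
  "simple_graph n E \<Longrightarrow> clif_center n E = {z. \<forall>S. z S \<noteq> 0 \<longrightarrow> S \<in> commutation_radical {1..n} E}"
  using clif_center_support_radical clif_center_if_support_radical by blast

interpretation clif_space: vector_space clif_scale
  by unfold_locales (auto simp: clif_scale_def fun_eq_iff algebra_simps)

lemma inj_clif_basis: "inj clif_basis"
  by (rule injI) (metis clif_basis_def one_neq_zero)

lemma sum_fun_apply: "(\<Sum>a\<in>A. f a) x = (\<Sum>a\<in>A. f a x)"
  by (induction A rule: infinite_finite_induct) auto

lemma clif_space_supported_in_span:
  assumes R: "finite R" and z: "\<And>S. z S \<noteq> 0 \<Longrightarrow> S \<in> R"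
  shows "z \<in> clif_space.span (clif_basis ` R)"
proof -
  have "z = (\<Sum>S\<in>R. clif_scale (z S) (clif_basis S))"
  proof
    fix U
    have "(\<Sum>S\<in>R. clif_scale (z S) (clif_basis S)) U = (\<Sum>S\<in>R. if S = U then z S else 0)"
      unfolding sum_fun_apply clif_scale_def clif_basis_def by (intro sum.cong) auto
    then show "z U = (\<Sum>S\<in>R. clif_scale (z S) (clif_basis S)) U" using R z by auto
  qed
  also have "\<dots> \<in> clif_space.span (clif_basis ` R)"
    by (intro clif_space.span_sum clif_space.span_scale clif_space.span_base) auto
  finally show ?thesis .
qed

lemma clif_space_independent_basis:
  assumes R: "finite R"
  shows "clif_space.independent (clif_basis ` R)"
proof (rule clif_space.independent_if_scalars_zero)
  fix c x assume sum0: "(\<Sum>y\<in>clif_basis ` R. clif_scale (c y) y) = 0" and x: "x \<in> clif_basis ` R"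
  then obtain S where S: "x = clif_basis S" by blast
  have "(\<Sum>y\<in>clif_basis ` R. clif_scale (c y) y) S = (\<Sum>y\<in>clif_basis ` R. if y = x then c y else 0)"
    unfolding sum_fun_apply
  proof (rule sum.cong[OF refl])
    fix y assume "y \<in> clif_basis ` R"
    then obtain T where T: "y = clif_basis T" by blast
    have "y = x \<longleftrightarrow> T = S" using inj_clif_basis S T by (auto dest: injD)
    then show "clif_scale (c y) y S = (if y = x then c y else 0)"
      using T by (simp add: clif_scale_def clif_basis_def)
  qed
  then show "c x = 0" using sum0 x R by simp
qed (use R in simp)

lemma clif_space_dim_supported:
  assumes R: "finite R"
  shows "clif_space.dim {z. \<forall>S. z S \<noteq> 0 \<longrightarrow> S \<in> R} = card R"
proof (rule clif_space.dim_unique[where B = "clif_basis ` R"])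
  show "clif_basis ` R \<subseteq> {z. \<forall>S. z S \<noteq> 0 \<longrightarrow> S \<in> R}"
    by (auto simp: clif_basis_def split: if_splits)
  show "card (clif_basis ` R) = card R"
    using inj_clif_basis by (simp add: card_image inj_on_subset)
qed (use R clif_space_supported_in_span clif_space_independent_basis in auto)

lemma clif_center_dim_eq_card_radical:
  assumes "simple_graph n E"
  shows "clif_center_dim n E = card (commutation_radical {1..n} E)"
proof -
  have "finite (commutation_radical {1..n} E)"
    unfolding commutation_radical_def by (rule finite_subset[of _ "Pow {1..n}"]) auto
  then show ?thesis
    unfolding clif_center_dim_def clif_center_eq[OF assms] by (rule clif_space_dim_supported)
qed

section \<open>Isomorphisms from isometries of the commutation form\<close>

text \<open>The linear map sending \<open>clif_basis S\<close> to \<open>\<gamma> S\<close> times \<open>clif_basis (f S)\<close>.\<close>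
definition clif_transport ::
  "nat \<Rightarrow> (nat set \<Rightarrow> nat set) \<Rightarrow> (nat set \<Rightarrow> complex) \<Rightarrow> (nat set \<Rightarrow> complex) \<Rightarrow> nat set \<Rightarrow> complex"
where
  "clif_transport n f \<gamma> x U =
     (if U \<subseteq> {1..n} then \<gamma> (inv_into (Pow {1..n}) f U) * x (inv_into (Pow {1..n}) f U) else 0)"

lemma clif_transport_apply:
  "bij_betw f (Pow {1..n}) (Pow {1..n}) \<Longrightarrow> S \<subseteq> {1..n} \<Longrightarrow> clif_transport n f \<gamma> x (f S) = \<gamma> S * x S"
  unfolding clif_transport_def by (simp add: bij_betw_Pow_subset inv_into_Pow_f)

lemma bij_betw_clif_transport:
  assumes f: "bij_betw f (Pow {1..n}) (Pow {1..n})" and \<gamma>: "\<And>S. \<gamma> S \<noteq> 0"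
  shows "bij_betw (clif_transport n f \<gamma>) (clif_carrier n) (clif_carrier n)"
proof (rule bij_betw_byWitness[where f' = "\<lambda>y S. if S \<subseteq> {1..n} then y (f S) / \<gamma> S else 0"])
  show "\<forall>x\<in>clif_carrier n. (\<lambda>S. if S \<subseteq> {1..n} then clif_transport n f \<gamma> x (f S) / \<gamma> S else 0) = x"
    using clif_transport_apply[OF f] \<gamma> by (auto simp: clif_carrier_def fun_eq_iff)
  show "\<forall>y\<in>clif_carrier n. clif_transport n f \<gamma> (\<lambda>S. if S \<subseteq> {1..n} then y (f S) / \<gamma> S else 0) = y"
    using inv_into_Pow_subset[OF f] f_inv_into_Pow[OF f] \<gamma>
    by (auto simp: clif_carrier_def fun_eq_iff clif_transport_def)
qed (simp_all add: clif_transport_def clif_carrier_def image_subset_iff)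

lemma clif_transport_mult:
  assumes f: "bij_betw f (Pow {1..n}) (Pow {1..n})" and lin: "symdiff_linear {1..n} f"
    and cocycle: "\<And>S T. S \<subseteq> {1..n} \<Longrightarrow> T \<subseteq> {1..n} \<Longrightarrow>
      \<gamma> S * \<gamma> T * clif_sign E2 (f S) (f T) = clif_sign E1 S T * \<gamma> (sym_diff S T)"
  shows "clif_transport n f \<gamma> (clif_mult n E1 x y) =
    clif_mult n E2 (clif_transport n f \<gamma> x) (clif_transport n f \<gamma> y)"
proof
  fix U
  let ?\<phi> = "clif_transport n f \<gamma>"
  show "?\<phi> (clif_mult n E1 x y) U = clif_mult n E2 (?\<phi> x) (?\<phi> y) U"
  proof (cases "U \<subseteq> {1..n}")
    case True
    define W where "W = inv_into (Pow {1..n}) f U"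
    have W: "W \<subseteq> {1..n}" "f W = U" unfolding W_def using True inv_into_Pow_subset[OF f] f_inv_into_Pow[OF f] by auto
    have "clif_mult n E2 (?\<phi> x) (?\<phi> y) (f W) =
        (\<Sum>S\<in>Pow {1..n}. clif_sign E2 (f S) (sym_diff (f S) (f W)) * ?\<phi> x (f S) * ?\<phi> y (sym_diff (f S) (f W)))"
      unfolding clif_mult_apply[OF True[folded W(2)]] by (rule sum.reindex_bij_betw[OF f, symmetric])
    also have "\<dots> = (\<Sum>S\<in>Pow {1..n}. \<gamma> W * (clif_sign E1 S (sym_diff S W) * x S * y (sym_diff S W)))"
    proof (rule sum.cong[OF refl])
      fix S assume "S \<in> Pow {1..n}"
      then have S: "S \<subseteq> {1..n}" and SW: "sym_diff S W \<subseteq> {1..n}" using W by auto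
      have "sym_diff (f S) (f W) = f (sym_diff S W)" using lin S W unfolding symdiff_linear_def by simp
      moreover have "sym_diff S (sym_diff S W) = W" by blast
      ultimately show "clif_sign E2 (f S) (sym_diff (f S) (f W)) * ?\<phi> x (f S) * ?\<phi> y (sym_diff (f S) (f W)) =
          \<gamma> W * (clif_sign E1 S (sym_diff S W) * x S * y (sym_diff S W))"
        using cocycle[OF S SW] clif_transport_apply[OF f S] clif_transport_apply[OF f SW]
        by (simp add: algebra_simps)
    qed
    also have "\<dots> = ?\<phi> (clif_mult n E1 x y) (f W)"
      unfolding clif_transport_apply[OF f W(1)] clif_mult_apply[OF W(1)]
      by (simp add: sum_distrib_left)
    finally show ?thesis using W(2) by simp
  qed (simp add: clif_transport_def clif_mult_def)
qed

lemma clif_transport_one: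
  assumes f: "bij_betw f (Pow {1..n}) (Pow {1..n})" and lin: "symdiff_linear {1..n} f"
    and \<gamma>: "\<And>S. \<gamma> S \<noteq> 0"
    and cocycle: "\<gamma> {} * \<gamma> {} * clif_sign E2 (f {}) (f {}) = clif_sign E1 {} {} * \<gamma> {}"
  shows "clif_transport n f \<gamma> clif_one = clif_one"
proof
  fix U
  have f0: "f {} = {}" by (rule symdiff_linear_empty[OF lin])
  then have \<gamma>0: "\<gamma> {} = 1"
    using cocycle \<gamma>[of "{}"] by (simp add: clif_sign_def)
  show "clif_transport n f \<gamma> clif_one U = clif_one U"
  proof (cases "U \<subseteq> {1..n}")
    case True
    then have "inv_into (Pow {1..n}) f U = {} \<longleftrightarrow> U = {}"
      using f_inv_into_Pow[OF f True] inv_into_Pow_f[OF f, of "{}"] f0 by force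
    then show ?thesis using True \<gamma>0 unfolding clif_transport_def clif_one_def clif_basis_def by auto
  qed (auto simp: clif_transport_def clif_one_def clif_basis_def)
qed

lemma clif_iso_of_cocycle:
  assumes f: "bij_betw f (Pow {1..n}) (Pow {1..n})" and lin: "symdiff_linear {1..n} f"
    and \<gamma>: "\<And>S. \<gamma> S \<noteq> 0"
    and cocycle: "\<And>S T. S \<subseteq> {1..n} \<Longrightarrow> T \<subseteq> {1..n} \<Longrightarrow>
      \<gamma> S * \<gamma> T * clif_sign E2 (f S) (f T) = clif_sign E1 S T * \<gamma> (sym_diff S T)"
  shows "clif_iso n E1 E2"
  unfolding clif_iso_def
proof (intro exI[of _ "clif_transport n f \<gamma>"] conjI ballI allI)
  show "bij_betw (clif_transport n f \<gamma>) (clif_carrier n) (clif_carrier n)"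
    using f \<gamma> by (rule bij_betw_clif_transport)
  show "clif_transport n f \<gamma> (clif_mult n E1 x y) =
      clif_mult n E2 (clif_transport n f \<gamma> x) (clif_transport n f \<gamma> y)" for x y
    using f lin cocycle by (rule clif_transport_mult)
  show "clif_transport n f \<gamma> clif_one = clif_one"
    using f lin \<gamma> cocycle[of "{}" "{}"] by (intro clif_transport_one) auto
qed (auto simp: clif_transport_def clif_scale_def fun_eq_iff algebra_simps)

definition commutation_equiv :: "'a set \<Rightarrow> ('a \<Rightarrow> 'a \<Rightarrow> bool) \<Rightarrow> ('a \<Rightarrow> 'a \<Rightarrow> bool) \<Rightarrow> bool" where
  "commutation_equiv V E1 E2 \<longleftrightarrow>
     (\<exists>f. bij_betw f (Pow V) (Pow V) \<and> symdiff_linear V f \<and>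
        (\<forall>S\<subseteq>V. \<forall>T\<subseteq>V. anticommute E2 (f S) (f T) = anticommute E1 S T))"

lemma clif_iso_of_commutation_equiv:
  assumes E1: "simple_graph n E1" and E2: "simple_graph n E2" and equiv: "commutation_equiv {1..n} E1 E2"
  shows "clif_iso n E1 E2"
proof -
  obtain f where f: "bij_betw f (Pow {1..n}) (Pow {1..n})" and lin: "symdiff_linear {1..n} f"
    and comm: "\<And>S T. S \<subseteq> {1..n} \<Longrightarrow> T \<subseteq> {1..n} \<Longrightarrow> anticommute E2 (f S) (f T) = anticommute E1 S T"
    using equiv unfolding commutation_equiv_def by auto
  note fV = bij_betw_Pow_subset[OF f]
  define B where "B S T \<longleftrightarrow>
    odd (pair_count (clif_sign_rel E1) S T) \<noteq> odd (pair_count (clif_sign_rel E2) (f S) (f T))" for S T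
  have bilinear: "symdiff_bilinear {1..n} B"
    unfolding B_def
    by (intro symdiff_bilinear_xor symdiff_bilinear_comp[OF _ lin fV]
        symdiff_bilinear_odd_pair_count finite_atLeastAtMost)
  have sym: "B S T = B T S" if "S \<subseteq> {1..n}" "T \<subseteq> {1..n}" for S T
    using odd_clif_sign_rel_swap[OF E1 that] odd_clif_sign_rel_swap[OF E2 fV fV, OF that]
      comm[OF that] unfolding B_def by argo
  obtain \<gamma> :: "nat set \<Rightarrow> complex" where \<gamma>: "\<And>S. \<gamma> S \<noteq> 0"
    and cob: "\<And>S T. S \<subseteq> {1..n} \<Longrightarrow> T \<subseteq> {1..n} \<Longrightarrow>
      \<gamma> S * \<gamma> T = (if B S T then -1 else 1) * \<gamma> (sym_diff S T)"
    by (rule symmetric_symdiff_bilinear_coboundary[OF finite_atLeastAtMost bilinear sym that])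
  show ?thesis
  proof (rule clif_iso_of_cocycle[OF f lin \<gamma>])
    fix S T assume S: "S \<subseteq> {1..n}" and T: "T \<subseteq> {1..n}"
    have fin: "finite S" "finite T" "finite (f S)" "finite (f T)"
      using S T fV[OF S] fV[OF T] by (simp_all add: rev_finite_subset[OF finite_atLeastAtMost])
    have "(if B S T then -1 else 1) * clif_sign E2 (f S) (f T) = clif_sign E1 S T"
      unfolding clif_sign_eq_pair_count[OF fin(1,2)] clif_sign_eq_pair_count[OF fin(3,4)] B_def
      by (simp add: minus_one_power_iff)
    then show "\<gamma> S * \<gamma> T * clif_sign E2 (f S) (f T) = clif_sign E1 S T * \<gamma> (sym_diff S T)"
      unfolding cob[OF S T] by (simp add: ac_simps)
  qed
qed

section \<open>Isometries of commutation forms\<close>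

lemma anticommute_cong:
  "(\<And>i j. i \<in> S \<Longrightarrow> j \<in> T \<Longrightarrow> E1 i j = E2 i j) \<Longrightarrow> anticommute E1 S T = anticommute E2 S T"
  unfolding anticommute_def by (simp cong: pair_count_cong)

lemma commutation_equiv_cong:
  assumes "\<And>i j. i \<in> V \<Longrightarrow> j \<in> V \<Longrightarrow> E1 i j = E2 i j"
  shows "commutation_equiv V E1 E2"
proof -
  have "anticommute E2 S T = anticommute E1 S T" if "S \<subseteq> V" "T \<subseteq> V" for S T
    by (intro anticommute_cong) (use assms that in blast)
  then show ?thesis
    unfolding commutation_equiv_def symdiff_linear_def by (intro exI[of _ id]) auto
qed

lemma commutation_equiv_sym:
  assumes "commutation_equiv V E1 E2"
  shows "commutation_equiv V E2 E1"
proof -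
  obtain f where f: "bij_betw f (Pow V) (Pow V)" and lin: "symdiff_linear V f"
    and comm: "\<And>S T. S \<subseteq> V \<Longrightarrow> T \<subseteq> V \<Longrightarrow> anticommute E2 (f S) (f T) = anticommute E1 S T"
    using assms unfolding commutation_equiv_def by auto
  let ?h = "inv_into (Pow V) f"
  have "anticommute E1 (?h S) (?h T) = anticommute E2 S T" if "S \<subseteq> V" "T \<subseteq> V" for S T
    using comm[of "?h S" "?h T"] inv_into_Pow_subset[OF f] f_inv_into_Pow[OF f] that by simp
  then show ?thesis
    unfolding commutation_equiv_def
    by (intro exI[of _ ?h] conjI bij_betw_inv_into[OF f] symdiff_linear_inv_into[OF f lin] allI impI)
qed

lemma commutation_equiv_trans:
  assumes "commutation_equiv V E1 E2" "commutation_equiv V E2 E3"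
  shows "commutation_equiv V E1 E3"
proof -
  obtain f where f: "bij_betw f (Pow V) (Pow V)" and lin_f: "symdiff_linear V f"
    and comm_f: "\<And>S T. S \<subseteq> V \<Longrightarrow> T \<subseteq> V \<Longrightarrow> anticommute E2 (f S) (f T) = anticommute E1 S T"
    using assms(1) unfolding commutation_equiv_def by auto
  obtain g where g: "bij_betw g (Pow V) (Pow V)" and lin_g: "symdiff_linear V g"
    and comm_g: "\<And>S T. S \<subseteq> V \<Longrightarrow> T \<subseteq> V \<Longrightarrow> anticommute E3 (g S) (g T) = anticommute E2 S T"
    using assms(2) unfolding commutation_equiv_def by auto
  note fV = bij_betw_Pow_subset[OF f]
  have "symdiff_linear V (g \<circ> f)"
    using lin_f lin_g fV unfolding symdiff_linear_def by simp
  moreover have "anticommute E3 ((g \<circ> f) S) ((g \<circ> f) T) = anticommute E1 S T"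
    if "S \<subseteq> V" "T \<subseteq> V" for S T
    using comm_f comm_g fV that by simp
  ultimately show ?thesis
    unfolding commutation_equiv_def by (intro exI[of _ "g \<circ> f"] conjI bij_betw_trans[OF f g] allI impI)
qed

lemma card_commutation_radical_le:
  assumes V: "finite V" and "commutation_equiv V E1 E2"
  shows "card (commutation_radical V E1) \<le> card (commutation_radical V E2)"
proof -
  obtain f where f: "bij_betw f (Pow V) (Pow V)"
    and comm: "\<And>S T. S \<subseteq> V \<Longrightarrow> T \<subseteq> V \<Longrightarrow> anticommute E2 (f S) (f T) = anticommute E1 S T"
    using assms(2) unfolding commutation_equiv_def by auto
  have "f S \<in> commutation_radical V E2" if S: "S \<in> commutation_radical V E1" for S
  proof -
    have "\<not> anticommute E2 (f S) T" if "T \<subseteq> V" for T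
      using S comm[of S "inv_into (Pow V) f T"] inv_into_Pow_subset[OF f that] f_inv_into_Pow[OF f that]
      unfolding commutation_radical_def by auto
    then show ?thesis using S bij_betw_Pow_subset[OF f] unfolding commutation_radical_def by auto
  qed
  moreover have "inj_on f (commutation_radical V E1)"
    using bij_betw_imp_inj_on[OF f] by (rule inj_on_subset) (auto simp: commutation_radical_def)
  moreover have "finite (commutation_radical V E2)"
    using V unfolding commutation_radical_def by (simp add: finite_subset[of _ "Pow V"] subset_iff)
  ultimately show ?thesis by (intro card_inj_on_le) auto
qed

lemma card_commutation_radical_eq:
  "finite V \<Longrightarrow> commutation_equiv V E1 E2 \<Longrightarrow>
    card (commutation_radical V E1) = card (commutation_radical V E2)"
  using card_commutation_radical_le commutation_equiv_sym by (metis order_antisym)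

lemma commutation_equiv_basis_change:
  assumes V: "finite V" and into: "\<And>i. i \<in> V \<Longrightarrow> g i \<subseteq> V"
    and kernel: "\<And>S. S \<subseteq> V \<Longrightarrow> symdiff_sum g S = {} \<Longrightarrow> S = {}"
  shows "commutation_equiv V (\<lambda>i j. anticommute E (g i) (g j)) E"
proof -
  let ?f = "symdiff_sum g"
  have fin: "finite S" if "S \<subseteq> V" for S using that by (rule rev_finite_subset[OF V])
  have fV: "?f S \<subseteq> V" if "S \<subseteq> V" for S using that into by (intro symdiff_sum_subset) blast
  have lin: "symdiff_linear V ?f"
    unfolding symdiff_linear_def using fin by (simp add: symdiff_sum_sym_diff)
  have "inj_on ?f (Pow V)"
  proof (rule inj_onI)
    fix S T assume "S \<in> Pow V" "T \<in> Pow V" and eq: "?f S = ?f T"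
    then have "sym_diff S T \<subseteq> V" "?f (sym_diff S T) = {}"
      using symdiff_sum_sym_diff[OF fin fin, of S T g] by auto
    then show "S = T" using kernel by blast
  qed
  moreover have "?f ` Pow V \<subseteq> Pow V" using fV by auto
  ultimately have bij: "bij_betw ?f (Pow V) (Pow V)"
    unfolding bij_betw_def using V by (simp add: endo_inj_surj)
  have bilinear: "symdiff_bilinear V (\<lambda>S T. anticommute E (?f S) (?f T))"
    unfolding anticommute_def
    by (intro symdiff_bilinear_comp[OF _ lin fV] symdiff_bilinear_odd_pair_count V)
  have "anticommute E (?f S) (?f T) = anticommute (\<lambda>i j. anticommute E (g i) (g j)) S T"
    if "S \<subseteq> V" "T \<subseteq> V" for S T
    using symdiff_bilinear_eq_odd_pair_count[OF V bilinear that]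
    unfolding symdiff_sum_singleton by (simp only: anticommute_def)
  then show ?thesis
    unfolding commutation_equiv_def by (intro exI[of _ ?f] conjI bij lin allI impI)
qed

lemma commutation_equiv_permute:
  assumes "finite V" "inj_on \<pi> V" "\<pi> ` V \<subseteq> V"
  shows "commutation_equiv V (\<lambda>i j. E (\<pi> i) (\<pi> j)) E"
proof -
  have "commutation_equiv V (\<lambda>i j. anticommute E {\<pi> i} {\<pi> j}) E"
  proof (rule commutation_equiv_basis_change[OF assms(1)])
    show "{\<pi> i} \<subseteq> V" if "i \<in> V" for i using assms(3) that by blast
    show "S = {}" if "S \<subseteq> V" "symdiff_sum (\<lambda>i. {\<pi> i}) S = {}" for S
      using inj_on_subset[OF assms(2) that(1)] that(2) by (rule symdiff_sum_eq_empty_inj)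
  qed
  then show ?thesis by (simp add: anticommute_def pair_count_singleton)
qed

lemma simple_graph_basis_change:
  assumes "simple_graph n E" and "\<And>i. i \<in> {1..n} \<Longrightarrow> g i \<subseteq> {1..n}"
  shows "simple_graph n (\<lambda>i j. anticommute E (g i) (g j))"
  using anticommute_sym[OF assms(1)] not_anticommute_self[OF assms(1)] assms(2)
  unfolding simple_graph_def by auto

section \<open>Symplectic normal form\<close>

definition hyperbolic :: "nat \<Rightarrow> nat \<Rightarrow> nat \<Rightarrow> bool" where
  "hyperbolic m i j \<longleftrightarrow> i \<le> 2 * m \<and> j \<le> 2 * m \<and> (odd i \<and> j = i + 1 \<or> odd j \<and> i = j + 1)"

definition partner :: "nat \<Rightarrow> nat" where
  "partner i = (if odd i then i + 1 else i - 1)"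

lemma partner_in_range: "1 \<le> i \<Longrightarrow> i \<le> 2 * m \<Longrightarrow> 1 \<le> partner i \<and> partner i \<le> 2 * m"
  unfolding partner_def by presburger

lemma hyperbolic_partner_iff:
  "1 \<le> i \<Longrightarrow> i \<le> 2 * m \<Longrightarrow> hyperbolic m k (partner i) \<longleftrightarrow> k = i"
  unfolding hyperbolic_def partner_def by presburger

lemma hyperbolic_sym: "hyperbolic m i j = hyperbolic m j i"
  unfolding hyperbolic_def by auto

lemma hyperbolic_Suc: "i \<le> 2 * r \<or> j \<le> 2 * r \<Longrightarrow> hyperbolic (Suc r) i j = hyperbolic r i j"
  unfolding hyperbolic_def by presburger

lemma not_hyperbolic_large: "2 * r < i \<or> 2 * r < j \<Longrightarrow> \<not> hyperbolic r i j"
  unfolding hyperbolic_def by auto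

lemma commutation_radical_hyperbolic:
  assumes m: "2 * m \<le> n"
  shows "commutation_radical {1..n} (hyperbolic m) = Pow {2 * m + 1..n}"
proof (intro equalityI subsetI)
  fix S assume S: "S \<in> commutation_radical {1..n} (hyperbolic m)"
  then have Sn: "S \<subseteq> {1..n}" unfolding commutation_radical_def by auto
  have large: "2 * m < i" if i: "i \<in> S" for i
  proof (rule ccontr)
    assume "\<not> 2 * m < i"
    then have i: "1 \<le> i" "i \<le> 2 * m" using Sn i by auto
    have "{k \<in> S. hyperbolic m k (partner i)} = {i}"
      using hyperbolic_partner_iff[OF i] \<open>i \<in> S\<close> by auto
    then have "anticommute (hyperbolic m) S {partner i}"
      unfolding anticommute_def pair_count_singleton_right by simp
    moreover have "{partner i} \<subseteq> {1..n}" using partner_in_range[OF i] m by auto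
    ultimately show False using S unfolding commutation_radical_def by simp
  qed
  have "i \<in> {2 * m + 1..n}" if "i \<in> S" for i
    using large[OF that] that Sn by auto
  then show "S \<in> Pow {2 * m + 1..n}" by blast
next
  fix S assume S: "S \<in> Pow {2 * m + 1..n}"
  then have "pair_count (hyperbolic m) S T = pair_count (\<lambda>_ _. False) S T" for T
    by (intro pair_count_cong) (auto simp: hyperbolic_def)
  then have "\<not> anticommute (hyperbolic m) S T" for T
    unfolding anticommute_def by (simp add: pair_count_False)
  moreover have "S \<subseteq> {1..n}" using S by auto
  ultimately show "S \<in> commutation_radical {1..n} (hyperbolic m)"
    unfolding commutation_radical_def by blast
qed

lemma card_commutation_radical_hyperbolic:
  "2 * m \<le> n \<Longrightarrow> card (commutation_radical {1..n} (hyperbolic m)) = 2 ^ (n - 2 * m)"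
  by (simp add: commutation_radical_hyperbolic card_Pow)

definition hyperbolic_prefix :: "nat \<Rightarrow> nat \<Rightarrow> (nat \<Rightarrow> nat \<Rightarrow> bool) \<Rightarrow> bool" where
  "hyperbolic_prefix n r E \<longleftrightarrow> simple_graph n E \<and> 2 * r \<le> n \<and>
     (\<forall>i\<in>{1..n}. \<forall>j\<in>{1..n}. i \<le> 2 * r \<or> j \<le> 2 * r \<longrightarrow> E i j = hyperbolic r i j)"

lemma hyperbolic_prefix_permute:
  assumes prefix: "hyperbolic_prefix n r E" and range: "\<pi> ` {1..n} \<subseteq> {1..n}"
    and small: "\<And>x. x \<le> 2 * r \<Longrightarrow> \<pi> x = x" and large: "\<And>x. 2 * r < x \<Longrightarrow> 2 * r < \<pi> x"
  shows "hyperbolic_prefix n r (\<lambda>i j. E (\<pi> i) (\<pi> j))"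
proof -
  have E: "simple_graph n E" "2 * r \<le> n"
    and E_prefix: "\<And>i j. i \<in> {1..n} \<Longrightarrow> j \<in> {1..n} \<Longrightarrow> i \<le> 2 * r \<or> j \<le> 2 * r \<Longrightarrow> E i j = hyperbolic r i j"
    using prefix unfolding hyperbolic_prefix_def by auto
  have \<pi>_range: "\<pi> i \<in> {1..n}" if "i \<in> {1..n}" for i using range that by blast
  have "E (\<pi> i) (\<pi> j) = hyperbolic r i j"
    if ij: "i \<in> {1..n}" "j \<in> {1..n}" and "i \<le> 2 * r \<or> j \<le> 2 * r" for i j
  proof (cases "i \<le> 2 * r \<and> j \<le> 2 * r")
    case True
    then show ?thesis using E_prefix[OF ij] small by simp
  next
    case False
    then have "2 * r < \<pi> i \<or> 2 * r < \<pi> j" "2 * r < i \<or> 2 * r < j"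
      using large \<open>i \<le> 2 * r \<or> j \<le> 2 * r\<close> by auto
    moreover have "\<pi> i \<le> 2 * r \<or> \<pi> j \<le> 2 * r" using \<open>i \<le> 2 * r \<or> j \<le> 2 * r\<close> small by auto
    ultimately show ?thesis using E_prefix[OF \<pi>_range[OF ij(1)] \<pi>_range[OF ij(2)]] not_hyperbolic_large by metis
  qed
  moreover have "simple_graph n (\<lambda>i j. E (\<pi> i) (\<pi> j))"
    using E(1) \<pi>_range unfolding simple_graph_def by blast
  ultimately show ?thesis unfolding hyperbolic_prefix_def using E(2) by blast
qed

lemma hyperbolic_prefix_edge_to_front:
  assumes prefix: "hyperbolic_prefix n r E"
    and a: "a \<in> {1..n}" "2 * r < a" and b: "b \<in> {1..n}" "2 * r < b" and "a \<noteq> b" and "E a b"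
  shows "\<exists>E'. commutation_equiv {1..n} E' E \<and> hyperbolic_prefix n r E' \<and> E' (2 * r + 1) (2 * r + 2)"
proof -
  let ?p = "2 * r + 1" and ?q = "2 * r + 2" and ?swap = "Transposition.transpose"
  define b' where "b' = ?swap ?p a b"
  define \<pi> where "\<pi> = ?swap ?p a \<circ> ?swap ?q b'"
  have b': "b' \<in> {1..n}" "2 * r < b'" "b' \<noteq> ?p"
    using a b \<open>a \<noteq> b\<close> unfolding b'_def Transposition.transpose_def by auto
  have q: "?q \<le> n" using a b \<open>a \<noteq> b\<close> by auto
  have \<pi>_pq: "\<pi> ?p = a" "\<pi> ?q = b"
    using b'(3) \<open>a \<noteq> b\<close> unfolding \<pi>_def b'_def by (simp_all add: Transposition.transpose_def)
  have \<pi>_range: "\<pi> ` {1..n} \<subseteq> {1..n}"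
    using a(1) b'(1) q unfolding \<pi>_def Transposition.transpose_def by auto
  moreover have "\<pi> x = x" if "x \<le> 2 * r" for x
    using that a(2) b'(2) unfolding \<pi>_def Transposition.transpose_def by simp
  moreover have "2 * r < \<pi> x" if "2 * r < x" for x
    using that a(2) b'(2) unfolding \<pi>_def Transposition.transpose_def by simp
  ultimately have "hyperbolic_prefix n r (\<lambda>i j. E (\<pi> i) (\<pi> j))"
    by (rule hyperbolic_prefix_permute[OF prefix])
  moreover have "inj_on \<pi> {1..n}" unfolding \<pi>_def by (intro inj_on_subset[OF inj_compose] inj_transpose) simp
  then have "commutation_equiv {1..n} (\<lambda>i j. E (\<pi> i) (\<pi> j)) E"
    using \<pi>_range by (intro commutation_equiv_permute) auto
  ultimately show ?thesis using \<pi>_pq \<open>E a b\<close> by auto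
qed

text \<open>Symplectic Gram-Schmidt step: adding \<open>q\<close> to every \<open>k\<close> adjacent to \<open>p\<close>, and \<open>p\<close> to
  every \<open>k\<close> adjacent to \<open>q\<close>, detaches \<open>k\<close> from the hyperbolic pair \<open>p, q\<close>.\<close>
definition clear_pair :: "(nat \<Rightarrow> nat \<Rightarrow> bool) \<Rightarrow> nat \<Rightarrow> nat \<Rightarrow> nat \<Rightarrow> nat set" where
  "clear_pair E p q k = {k} \<union> (if E k p then {q} else {}) \<union> (if E k q then {p} else {})"

lemma anticommute_clear_pair:
  assumes "k \<noteq> p" "k \<noteq> q" "p \<noteq> q"
  shows "anticommute E (clear_pair E p q k) {j} \<longleftrightarrow> (E k j \<noteq> (E k p \<and> E q j)) \<noteq> (E k q \<and> E p j)"
proof -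
  let ?Xq = "if E k p then {q} else {}" and ?Xp = "if E k q then {p} else {}"
  have "pair_count E (clear_pair E p q k) {j} = pair_count E ({k} \<union> ?Xq) {j} + pair_count E ?Xp {j}"
    unfolding clear_pair_def using assms by (intro pair_count_Un_left) auto
  also have "pair_count E ({k} \<union> ?Xq) {j} = pair_count E {k} {j} + pair_count E ?Xq {j}"
    using assms by (intro pair_count_Un_left) auto
  finally have "pair_count E (clear_pair E p q k) {j} =
      of_bool (E k j) + of_bool (E k p \<and> E q j) + of_bool (E k q \<and> E p j)"
    by (simp only: pair_count_singleton pair_count_if_singleton)
  then show ?thesis unfolding anticommute_def by (simp only: odd_of_bool_add3)
qed

lemma hyperbolic_prefix_clear_column:
  assumes prefix: "hyperbolic_prefix n r E" and edge: "E (2 * r + 1) (2 * r + 2)"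
    and q: "2 * r + 2 \<le> n" and i: "i \<in> {1..n}" and j: "j \<in> {1..n}" "j \<le> 2 * r + 2"
  shows "anticommute E (if 2 * r + 2 < i then clear_pair E (2 * r + 1) (2 * r + 2) i else {i}) {j} =
    hyperbolic (Suc r) i j"
proof -
  let ?p = "2 * r + 1" and ?q = "2 * r + 2"
  have pq: "?p \<in> {1..n}" "?q \<in> {1..n}" using q by auto
  have sym: "E x y = E y x" if "x \<in> {1..n}" "y \<in> {1..n}" for x y
    using prefix that unfolding hyperbolic_prefix_def simple_graph_def by auto
  have irrefl: "\<not> E ?p ?p" "\<not> E ?q ?q"
    using prefix pq unfolding hyperbolic_prefix_def simple_graph_def by auto
  have E_prefix: "E x y = hyperbolic r x y" if "x \<in> {1..n}" "y \<in> {1..n}" "x \<le> 2 * r \<or> y \<le> 2 * r" for x y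
    using prefix that unfolding hyperbolic_prefix_def by auto
  have E_pq: "E ?p ?q" "E ?q ?p" using edge sym[OF pq] by auto
  show ?thesis
  proof (cases "?q < i")
    case False
    have "E i j = hyperbolic (Suc r) i j"
    proof (cases "i \<le> 2 * r \<or> j \<le> 2 * r")
      case True
      then show ?thesis using E_prefix[OF i j(1)] hyperbolic_Suc by simp
    next
      case False
      then have "i \<in> {?p, ?q}" "j \<in> {?p, ?q}" using \<open>\<not> ?q < i\<close> j(2) by auto
      then show ?thesis using E_pq irrefl unfolding hyperbolic_def by auto
    qed
    then show ?thesis using False by (simp add: anticommute_def pair_count_singleton)
  next
    case True
    then have "\<not> hyperbolic (Suc r) i j" by (intro not_hyperbolic_large) simp
    moreover have "\<not> E i j" "\<not> E ?p j" "\<not> E ?q j" if "j \<le> 2 * r"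
      using that True E_prefix[OF i j(1)] E_prefix[OF pq(1) j(1)] E_prefix[OF pq(2) j(1)]
        not_hyperbolic_large[of r] by auto
    moreover have "j \<le> 2 * r \<or> j = ?p \<or> j = ?q" using j(2) by auto
    ultimately show ?thesis
      using True anticommute_clear_pair[of i ?p ?q E j] E_pq irrefl i
        sym[OF i pq(1)] sym[OF i pq(2)] by auto
  qed
qed

lemma hyperbolic_prefix_extend:
  assumes prefix: "hyperbolic_prefix n r E" and edge: "E (2 * r + 1) (2 * r + 2)" and q: "2 * r + 2 \<le> n"
  shows "\<exists>E'. commutation_equiv {1..n} E' E \<and> hyperbolic_prefix n (Suc r) E'"
proof -
  let ?p = "2 * r + 1" and ?q = "2 * r + 2"
  define g where "g k = (if ?q < k then clear_pair E ?p ?q k else {k})" for k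
  have g_range: "g i \<subseteq> {1..n}" if "i \<in> {1..n}" for i
    using that q unfolding g_def clear_pair_def by auto
  have "S = {}" if "S \<subseteq> {1..n}" "symdiff_sum g S = {}" for S
  proof (rule symdiff_sum_eq_empty_unitriangular)
    show "finite S" using that(1) by (rule rev_finite_subset[OF finite_atLeastAtMost])
    show "i \<in> g i" "g i \<subseteq> {..i}" for i unfolding g_def clear_pair_def by auto
  qed (use that in simp)
  then have equiv: "commutation_equiv {1..n} (\<lambda>i j. anticommute E (g i) (g j)) E"
    using g_range by (intro commutation_equiv_basis_change) auto
  have simple: "simple_graph n (\<lambda>i j. anticommute E (g i) (g j))"
    using prefix g_range unfolding hyperbolic_prefix_def by (intro simple_graph_basis_change) auto
  have column: "anticommute E (g i) (g j) = hyperbolic (Suc r) i j"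
    if "i \<in> {1..n}" "j \<in> {1..n}" "j \<le> ?q" for i j
    using hyperbolic_prefix_clear_column[OF prefix edge q that] that(3) unfolding g_def by simp
  have "anticommute E (g i) (g j) = hyperbolic (Suc r) i j"
    if "i \<in> {1..n}" "j \<in> {1..n}" "i \<le> 2 * Suc r \<or> j \<le> 2 * Suc r" for i j
  proof (cases "j \<le> ?q")
    case False
    then have "i \<le> ?q" using that(3) by auto
    have "anticommute E (g i) (g j) = anticommute E (g j) (g i)"
      using simple that unfolding simple_graph_def by blast
    also have "\<dots> = hyperbolic (Suc r) i j"
      using column[of j i] that \<open>i \<le> ?q\<close> hyperbolic_sym by auto
    finally show ?thesis .
  qed (use column that in auto)
  then have "hyperbolic_prefix n (Suc r) (\<lambda>i j. anticommute E (g i) (g j))"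
    unfolding hyperbolic_prefix_def using simple q by auto
  then show ?thesis using equiv by blast
qed

lemma hyperbolic_prefix_normal_form:
  assumes "hyperbolic_prefix n r E"
  shows "\<exists>m. 2 * m \<le> n \<and> commutation_equiv {1..n} E (hyperbolic m)"
  using assms
proof (induction "n - 2 * r" arbitrary: r E rule: less_induct)
  case less
  have E: "simple_graph n E" "2 * r \<le> n"
    and E_prefix: "\<And>i j. i \<in> {1..n} \<Longrightarrow> j \<in> {1..n} \<Longrightarrow> i \<le> 2 * r \<or> j \<le> 2 * r \<Longrightarrow> E i j = hyperbolic r i j"
    using less.prems unfolding hyperbolic_prefix_def by auto
  show ?case
  proof (cases "\<exists>a\<in>{1..n}. \<exists>b\<in>{1..n}. 2 * r < a \<and> 2 * r < b \<and> E a b")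
    case False
    then have "E i j = hyperbolic r i j" if "i \<in> {1..n}" "j \<in> {1..n}" for i j
      using E_prefix[OF that] that not_hyperbolic_large[of r i j] by (meson not_le)
    then show ?thesis using E(2) commutation_equiv_cong by blast
  next
    case True
    then obtain a b where a: "a \<in> {1..n}" "2 * r < a" and b: "b \<in> {1..n}" "2 * r < b" and "E a b"
      by blast
    then have "a \<noteq> b" using E(1) unfolding simple_graph_def by auto
    then have q: "2 * r + 2 \<le> n" using a b by auto
    obtain E1 where E1: "commutation_equiv {1..n} E1 E" "hyperbolic_prefix n r E1" "E1 (2 * r + 1) (2 * r + 2)"
      using hyperbolic_prefix_edge_to_front[OF less.prems a b \<open>a \<noteq> b\<close> \<open>E a b\<close>] by blast
    obtain E2 where E2: "commutation_equiv {1..n} E2 E1" "hyperbolic_prefix n (Suc r) E2"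
      using hyperbolic_prefix_extend[OF E1(2,3) q] by blast
    have "n - 2 * Suc r < n - 2 * r" using q by simp
    then obtain m where "2 * m \<le> n" "commutation_equiv {1..n} E2 (hyperbolic m)"
      using less.hyps E2(2) by blast
    moreover have "commutation_equiv {1..n} E E2"
      using commutation_equiv_trans[OF E2(1) E1(1)] by (rule commutation_equiv_sym)
    ultimately show ?thesis using commutation_equiv_trans by blast
  qed
qed

lemma commutation_equiv_hyperbolic:
  "simple_graph n E \<Longrightarrow> \<exists>m. 2 * m \<le> n \<and> commutation_equiv {1..n} E (hyperbolic m)"
  by (rule hyperbolic_prefix_normal_form[where r = 0]) (simp add: hyperbolic_prefix_def)

theorem mainTheorem1:
  fixes n :: nat and E1 E2 :: "nat \<Rightarrow> nat \<Rightarrow> bool"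
  assumes "n \<ge> 1"
    and "simple_graph n E1" and "simple_graph n E2"
    and "clif_center_dim n E1 = clif_center_dim n E2"
  shows "clif_iso n E1 E2"
proof -
  obtain m1 where m1: "2 * m1 \<le> n" "commutation_equiv {1..n} E1 (hyperbolic m1)"
    using commutation_equiv_hyperbolic[OF assms(2)] by blast
  obtain m2 where m2: "2 * m2 \<le> n" "commutation_equiv {1..n} E2 (hyperbolic m2)"
    using commutation_equiv_hyperbolic[OF assms(3)] by blast
  have "(2::nat) ^ (n - 2 * m1) = 2 ^ (n - 2 * m2)"
    using assms(4) clif_center_dim_eq_card_radical[OF assms(2)] clif_center_dim_eq_card_radical[OF assms(3)]
      card_commutation_radical_eq[OF _ m1(2)] card_commutation_radical_eq[OF _ m2(2)]
      card_commutation_radical_hyperbolic[OF m1(1)] card_commutation_radical_hyperbolic[OF m2(1)]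
    by simp
  then have "m1 = m2" using m1(1) m2(1) by simp
  then have "commutation_equiv {1..n} E1 E2"
    using m1(2) commutation_equiv_sym[OF m2(2)] by (auto intro: commutation_equiv_trans)
  then show ?thesis using assms(2,3) by (rule clif_iso_of_commutation_equiv[rotated 2])
qed

end
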